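(* Let $\mathcal{M},\mathcal{N}\in\mathbb{N}$, let $\phi:[0,+\infty)\to(0,1]$ be non-increasing, and let $\boldsymbol{L}\in\mathbb{R}^{\mathcal{M}\times\mathcal{N}}$ be $\phi$-multiplicatively badly approximable. Let $\varepsilon,T>0$, $\boldsymbol{Q}\in[1,+\infty)^{\mathcal{N}}$ and $Q:=(Q_1\cdots Q_{\mathcal{N}})^{1/\mathcal{N}}$. If $\varepsilon Q^{\mathcal{N}}/\phi(Q)<1$, then $\Lambda_{\boldsymbol{L}}\cap Z\subset C$.
   Context: $\|x\|$ is the distance from $x\in\mathbb{R}$ to the nearest integer, $L_i\boldsymbol{q}=\sum_jL_{ij}q_j$ for the rows $L_i$ of $\boldsymbol{L}$. $\boldsymbol{L}$ is $\phi$-multiplicatively badly approximable if for all $\boldsymbol{q}\in\mathbb{Z}^{\mathcal{N}}\setminus\{\boldsymbol{0}\}$, $\prod_{j}\max\{1,|q_j|\}\prod_{i}\|L_i\boldsymbol{q}\|\ge\phi\big((\prod_j\max\{1,|q_j|\})^{1/\mathcal{N}}\big)$. $\Lambda_{\boldsymbol{L}}:=\{(L_1\boldsymbol{q}+p_1,\dots,L_{\mathcal{M}}\boldsymbol{q}+p_{\mathcal{M}},\boldsymbol{q}):\boldsymbol{p}\in\mathbb{Z}^{\mathcal{M}},\boldsymbol{q}\in\mathbb{Z}^{\mathcal{N}}\}$; $H:=\{\boldsymbol{x}\in\mathbb{R}^{\mathcal{M}}:\prod_i|x_i|<\varepsilon,\ |x_i|\le T\ \forall i\}$; $Z:=H\times\prod_{j=1}^{\mathcal{N}}[-Q_j,Q_j]$;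 $C:=\{(\boldsymbol{x},\boldsymbol{y})\in\mathbb{R}^{\mathcal{M}}\times\mathbb{R}^{\mathcal{N}}:\boldsymbol{y}=\boldsymbol{0}\}$. *)

theory Defs
  imports "HOL-Analysis.Analysis"
begin

definition dist_int :: "real \<Rightarrow> real" where
  "dist_int x = \<bar>x - of_int (round x)\<bar>"

definition row_apply :: "real^'n^'m \<Rightarrow> 'm \<Rightarrow> int^'n \<Rightarrow> real" where
  "row_apply L i q = (\<Sum>j\<in>UNIV. L $ i $ j * of_int (q $ j))"

definition mult_badly_approx :: "(real \<Rightarrow> real) \<Rightarrow> real^'n^'m \<Rightarrow> bool" where
  "mult_badly_approx \<phi> L \<longleftrightarrow>
     (\<forall>q::int^'n. q \<noteq> 0 \<longrightarrow>
        (\<Prod>j\<in>UNIV. max 1 \<bar>real_of_int (q $ j)\<bar>) * (\<Prod>i\<in>UNIV. dist_int (row_apply L i q))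
        \<ge> \<phi> ((\<Prod>j\<in>UNIV. max 1 \<bar>real_of_int (q $ j)\<bar>) powr (1 / real CARD('n))))"

definition lattice_L :: "real^'n^'m \<Rightarrow> ((real^'m) \<times> (real^'n)) set" where
  "lattice_L L = {((\<chi> i. row_apply L i q + of_int (p $ i)), (\<chi> j. real_of_int (q $ j))) | p q.
                   (p :: int^'m) \<in> UNIV \<and> (q :: int^'n) \<in> UNIV}"

definition H_set :: "real \<Rightarrow> real \<Rightarrow> (real^'m) set" where
  "H_set \<epsilon> T = {x. (\<Prod>i\<in>UNIV. \<bar>x $ i\<bar>) < \<epsilon> \<and> (\<forall>i. \<bar>x $ i\<bar> \<le> T)}"

definition Z_set :: "real \<Rightarrow> real \<Rightarrow> real^'n \<Rightarrow> ((real^'m) \<times> (real^'n)) set" where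
  "Z_set \<epsilon> T Q = H_set \<epsilon> T \<times> {y. \<forall>j. -(Q $ j) \<le> y $ j \<and> y $ j \<le> Q $ j}"

definition C_set :: "((real^'m) \<times> (real^'n)) set" where
  "C_set = {(x, y). y = 0}"

end

theory Submission
  imports Defs
begin

text \<open>A point of \<open>\<Lambda>\<^sub>L \<inter> Z\<close> with \<open>q \<noteq> 0\<close> has \<open>|q\<^sub>j| \<le> Q\<^sub>j\<close>, so the height \<open>\<Prod>\<^sub>j max 1 |q\<^sub>j|\<close>
  is at most \<open>Q\<^sup>N\<close>; as \<open>\<phi>\<close> is non-increasing, bad approximability gives
  \<open>\<phi>(Q) \<le> Q\<^sup>N \<Prod>\<^sub>i \<parallel>L\<^sub>i q\<parallel> \<le> Q\<^sup>N \<Prod>\<^sub>i |L\<^sub>i q + p\<^sub>i| < \<epsilon> Q\<^sup>N\<close>, contradicting \<open>\<epsilon> Q\<^sup>N < \<phi>(Q)\<close>.\<close>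

lemma dist_int_le_abs_add_of_int: "dist_int x \<le> \<bar>x + of_int k\<bar>"
  using round_diff_minimal[of x "- k"] by (simp add: dist_int_def)

lemma prod_dist_int_le_prod_abs_add_of_int:
  "(\<Prod>i\<in>A. dist_int (f i)) \<le> (\<Prod>i\<in>A. \<bar>f i + of_int (k i)\<bar>)"
  by (intro prod_mono conjI dist_int_le_abs_add_of_int) (simp add: dist_int_def)

lemma prod_max_1_abs_le_prod:
  fixes a b :: "'a \<Rightarrow> real"
  assumes "\<And>j. j \<in> A \<Longrightarrow> \<bar>a j\<bar> \<le> b j" and "\<And>j. j \<in> A \<Longrightarrow> 1 \<le> b j"
  shows "(\<Prod>j\<in>A. max 1 \<bar>a j\<bar>) \<le> (\<Prod>j\<in>A. b j)"
  using assms by (intro prod_mono) auto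

lemma powr_inverse_power_cancel:
  fixes x :: real
  assumes "0 \<le> x" and "0 < n"
  shows "(x powr (1 / real n)) ^ n = x"
  using assms by (simp add: root_powr_inverse[symmetric] real_root_pow_pos2)

lemma mult_badly_approx_box_bound:
  fixes L :: "real^'n^'m" and q :: "int^'n" and Q :: "real^'n"
  assumes phi_mono: "\<And>s t. 0 \<le> s \<Longrightarrow> s \<le> t \<Longrightarrow> \<phi> t \<le> \<phi> s"
    and bad: "mult_badly_approx \<phi> L"
    and "q \<noteq> 0"
    and q_le: "\<And>j. \<bar>real_of_int (q $ j)\<bar> \<le> Q $ j"
    and Q_ge: "\<And>j. 1 \<le> Q $ j"
  shows "\<phi> ((\<Prod>j\<in>UNIV. Q $ j) powr (1 / real CARD('n)))
           \<le> (\<Prod>j\<in>UNIV. Q $ j) * (\<Prod>i\<in>UNIV. dist_int (row_apply L i q))"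
proof -
  define height where "height = (\<Prod>j\<in>UNIV. max 1 \<bar>real_of_int (q $ j)\<bar>)"
  have height_le: "height \<le> (\<Prod>j\<in>UNIV. Q $ j)"
    unfolding height_def using q_le Q_ge by (rule prod_max_1_abs_le_prod)
  have "height > 0"
    unfolding height_def by (intro prod_pos) auto
  then have "\<phi> ((\<Prod>j\<in>UNIV. Q $ j) powr (1 / real CARD('n)))
               \<le> \<phi> (height powr (1 / real CARD('n)))"
    using height_le by (intro phi_mono powr_mono2) auto
  also have "\<dots> \<le> height * (\<Prod>i\<in>UNIV. dist_int (row_apply L i q))"
    using bad \<open>q \<noteq> 0\<close> unfolding mult_badly_approx_def height_def by blast
  also have "\<dots> \<le> (\<Prod>j\<in>UNIV. Q $ j) * (\<Prod>i\<in>UNIV. dist_int (row_apply L i q))"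
    using height_le by (intro mult_right_mono prod_nonneg) (auto simp: dist_int_def)
  finally show ?thesis .
qed

theorem lemma2p5:
  fixes \<phi> :: "real \<Rightarrow> real"
    and L :: "real^'n^'m"
    and \<epsilon> T :: real
    and Q :: "real^'n"
  assumes phi_range: "\<And>t. t \<ge> 0 \<Longrightarrow> 0 < \<phi> t \<and> \<phi> t \<le> 1"
    and phi_mono: "\<And>s t. 0 \<le> s \<Longrightarrow> s \<le> t \<Longrightarrow> \<phi> t \<le> \<phi> s"
    and bad: "mult_badly_approx \<phi> L"
    and eps_pos: "\<epsilon> > 0" and T_pos: "T > 0"
    and Q_ge: "\<And>j. Q $ j \<ge> 1"
    and small: "\<epsilon> * ((\<Prod>j\<in>UNIV. Q $ j) powr (1 / real CARD('n))) ^ CARD('n)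
                 / \<phi> ((\<Prod>j\<in>UNIV. Q $ j) powr (1 / real CARD('n))) < 1"
  shows "lattice_L L \<inter> Z_set \<epsilon> T Q \<subseteq> (C_set :: ((real^'m) \<times> (real^'n)) set)"
proof
  fix z assume z: "z \<in> lattice_L L \<inter> Z_set \<epsilon> T Q"
  then obtain p :: "int^'m" and q :: "int^'n" where
    z_eq: "z = ((\<chi> i. row_apply L i q + of_int (p $ i)), (\<chi> j. real_of_int (q $ j)))"
    unfolding lattice_L_def by blast
  have x_small: "(\<Prod>i\<in>UNIV. \<bar>row_apply L i q + of_int (p $ i)\<bar>) < \<epsilon>"
    and q_le: "\<And>j. \<bar>real_of_int (q $ j)\<bar> \<le> Q $ j"
    using z unfolding z_eq Z_set_def H_set_def by (auto simp: abs_le_iff minus_le_iff)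
  show "z \<in> C_set"
  proof (cases "q = 0")
    case False
    define Q_prod where "Q_prod = (\<Prod>j\<in>UNIV. Q $ j)"
    have "Q_prod > 0"
      unfolding Q_prod_def using Q_ge by (intro prod_pos) (meson less_le_trans zero_less_one)
    have "\<phi> (Q_prod powr (1 / real CARD('n))) \<le> Q_prod * (\<Prod>i\<in>UNIV. dist_int (row_apply L i q))"
      unfolding Q_prod_def using phi_mono bad False q_le Q_ge by (rule mult_badly_approx_box_bound)
    also have "\<dots> \<le> Q_prod * (\<Prod>i\<in>UNIV. \<bar>row_apply L i q + of_int (p $ i)\<bar>)"
      using \<open>Q_prod > 0\<close> by (simp add: prod_dist_int_le_prod_abs_add_of_int)
    also have "\<dots> < \<epsilon> * (Q_prod powr (1 / real CARD('n))) ^ CARD('n)"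
      using \<open>Q_prod > 0\<close> x_small by (simp add: powr_inverse_power_cancel)
    also have "\<dots> < \<phi> (Q_prod powr (1 / real CARD('n)))"
      using small phi_range[of "Q_prod powr (1 / real CARD('n))"]
      unfolding Q_prod_def by (simp add: divide_less_eq)
    finally have "\<phi> (Q_prod powr (1 / real CARD('n))) < \<phi> (Q_prod powr (1 / real CARD('n)))" .
    then show ?thesis by simp
  qed (simp add: z_eq C_set_def vec_eq_iff)
qed

end
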